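(* Let $\bar x \in \mathrm{dom}\,\psi$, $H>0$, let $F'(\bar x)\in\partial F(\bar x)$ be a chosen subgradient with $F'(\bar x)\neq 0$, let $A = A_H(\bar x) = \frac{1}{\sigma}\sqrt{\frac{H}{3}\|F'(\bar x)\|_*}$ and $T = T_A(\bar x)$. Assume that $$f(T) \le f(\bar x) + \langle \nabla f(\bar x), T - \bar x\rangle + \tfrac12 \langle \nabla^2 f(\bar x)(T-\bar x), T - \bar x\rangle + \tfrac{H}{6}\|T - \bar x\|^3 .$$ Then $$F(\bar x) - F(T) \;\ge\; \tfrac12 \langle \nabla^2 f(\bar x)(T-\bar x), T-\bar x\rangle + \tfrac12 \sigma A \|T - \bar x\|^2 .$$
   Context: $\mathbb{E}$ is a finite-dimensional real vector space with an arbitrary norm $\|\cdot\|$; $\mathbb{E}^*$ is its dual with dual norm $\|g\|_* = \max\{\langle g, x\rangle : \|x\|\le 1\}$. $F = f + \psi$, where $\psi$ is a closed convex function with $\mathrm{dom}\,\psi \subseteq \mathbb{E}$ and $f$ is convex and twice continuously differentiable; subgradients of $F$ have the form $F'(\bar x) = \nabla f(\bar x) + \psi'(\bar x)$ with $\psi'(\bar x) \in \partial \psi(\bar x)$. The scaling function $d$ is differentiable and satisfies, for some $\sigma\in(0,1]$ and all $x,y \in \mathrm{dom}\,\psi$: $d(y) \ge d(x) + \langle \nabla d(x), y-x\rangle + \frac{\sigma}{2}\|y-x\|^2$ and $\|\nabla d(x) - \nabla d(y)\|_* \le \|x-y\|$. Bregman distance: $\rho(x,y) = d(y) - d(x) -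 \langle \nabla d(x), y-x\rangle$. For $A>0$, $$T_A(\bar x) = \arg\min_{y\in\mathrm{dom}\,\psi}\Big[ f(\bar x) + \langle \nabla f(\bar x), y-\bar x\rangle + \tfrac12 \langle \nabla^2 f(\bar x)(y-\bar x), y-\bar x\rangle + A\rho(\bar x,y) + \psi(y)\Big].$$ *)

theory Defs
  imports "HOL-Analysis.Analysis"
begin

text \<open>An arbitrary norm on the finite-dimensional space 'a (the library norm is Euclidean,
so the paper's norm is a separate function).\<close>
definition is_norm :: "('a::real_vector \<Rightarrow> real) \<Rightarrow> bool" where
  "is_norm N \<longleftrightarrow> (\<forall>x y. N (x + y) \<le> N x + N y) \<and> (\<forall>c x. N (c *\<^sub>R x) = \<bar>c\<bar> * N x)
      \<and> (\<forall>x. N x = 0 \<longleftrightarrow> x = 0)"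

text \<open>Dual norm; the dual space is identified with 'a via the inner product.\<close>
definition dual_norm :: "('a::real_inner \<Rightarrow> real) \<Rightarrow> 'a \<Rightarrow> real" where
  "dual_norm N g = Sup {g \<bullet> x | x. N x \<le> 1}"

text \<open>A closed convex function with effective domain D: real-valued on D, +infinity outside,
convex, with closed epigraph.\<close>
definition closed_convex_fun :: "'a::real_normed_vector set \<Rightarrow> ('a \<Rightarrow> real) \<Rightarrow> bool" where
  "closed_convex_fun D psi \<longleftrightarrow> convex D \<and> convex_on D psi
      \<and> closed {(x, t). x \<in> D \<and> psi x \<le> t}"

definition is_subgrad :: "'a::real_inner set \<Rightarrow> ('a \<Rightarrow> real) \<Rightarrow> 'a \<Rightarrow> 'a \<Rightarrow> bool" where
  "is_subgrad D psi x g \<longleftrightarrow> (\<forall>y\<in>D. psi y \<ge> psi x + g \<bullet> (y - x))"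

definition bregman :: "('a::real_inner \<Rightarrow> real) \<Rightarrow> ('a \<Rightarrow> 'a) \<Rightarrow> 'a \<Rightarrow> 'a \<Rightarrow> real" where
  "bregman d gd x y = d y - d x - gd x \<bullet> (y - x)"

definition model :: "('a::real_inner \<Rightarrow> real) \<Rightarrow> ('a \<Rightarrow> 'a) \<Rightarrow> ('a \<Rightarrow> 'a \<Rightarrow>\<^sub>L 'a)
     \<Rightarrow> ('a \<Rightarrow> real) \<Rightarrow> ('a \<Rightarrow> 'a) \<Rightarrow> ('a \<Rightarrow> real) \<Rightarrow> real \<Rightarrow> 'a \<Rightarrow> 'a \<Rightarrow> real" where
  "model f gf hf d gd psi A xb y =
     f xb + gf xb \<bullet> (y - xb) + 1/2 * ((hf xb) (y - xb) \<bullet> (y - xb))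
     + A * bregman d gd xb y + psi y"

text \<open>T is T_A(xb): a minimizer of the model over dom psi (the minimizer is unique).\<close>
definition is_T :: "('a::real_inner \<Rightarrow> real) \<Rightarrow> ('a \<Rightarrow> 'a) \<Rightarrow> ('a \<Rightarrow> 'a \<Rightarrow>\<^sub>L 'a)
     \<Rightarrow> ('a \<Rightarrow> real) \<Rightarrow> ('a \<Rightarrow> 'a) \<Rightarrow> 'a set \<Rightarrow> ('a \<Rightarrow> real) \<Rightarrow> real \<Rightarrow> 'a \<Rightarrow> 'a \<Rightarrow> bool" where
  "is_T f gf hf d gd D psi A xb T \<longleftrightarrow> T \<in> D \<and>
     (\<forall>y\<in>D. model f gf hf d gd psi A xb T \<le> model f gf hf d gd psi A xb y)"

end

theory Submission
  imports Defs
begin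

(* Write r = T - xb. The first-order optimality condition of the model at T, tested at xb,
   bounds psi xb - psi T - <grad f xb, r> - <Hess f xb r, r> from below by
   A <grad d T - grad d xb, r>, which is at least sigma A N(r)^2 by strong convexity of d.
   The subgradient inequality bounds the same quantity from above by |F'(xb)|_* N(r).
   Hence sigma A N(r) <= |F'(xb)|_* = 3 (sigma A)^2 / H, i.e. H N(r) / 6 <= sigma A / 2, so the
   cubic term of the upper bound on f T is absorbed by half of sigma A N(r)^2. *)

lemma is_norm_triangle: "is_norm N \<Longrightarrow> N (x + y) \<le> N x + N y"
  unfolding is_norm_def by blast

lemma is_norm_scaleR: "is_norm N \<Longrightarrow> N (c *\<^sub>R x) = \<bar>c\<bar> * N x"
  unfolding is_norm_def by blast

lemma is_norm_eq_0_iff: "is_norm N \<Longrightarrow> N x = 0 \<longleftrightarrow> x = 0"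
  unfolding is_norm_def by blast

lemma is_norm_zero: "is_norm N \<Longrightarrow> N 0 = 0"
  by (simp add: is_norm_eq_0_iff)

lemma is_norm_minus: "is_norm N \<Longrightarrow> N (- x) = N x"
  using is_norm_scaleR[of N "-1" x] by simp

lemma is_norm_commute: "is_norm N \<Longrightarrow> N (x - y) = N (y - x)"
  using is_norm_minus[of N "y - x"] by simp

lemma is_norm_nonneg: "is_norm N \<Longrightarrow> 0 \<le> N x"
  using is_norm_triangle[of N x "- x"] by (simp add: is_norm_zero is_norm_minus)

lemma is_norm_pos: "is_norm N \<Longrightarrow> x \<noteq> 0 \<Longrightarrow> 0 < N x"
  using is_norm_nonneg is_norm_eq_0_iff by (metis order_le_less)

lemma is_norm_convex: "is_norm N \<Longrightarrow> convex_on UNIV N"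
proof (rule convex_onI)
  fix t :: real and x y
  assume N: "is_norm N" and t: "0 < t" "t < 1"
  have "N ((1 - t) *\<^sub>R x + t *\<^sub>R y) \<le> N ((1 - t) *\<^sub>R x) + N (t *\<^sub>R y)"
    using is_norm_triangle[OF N] .
  also have "\<dots> = (1 - t) * N x + t * N y"
    using t by (simp add: is_norm_scaleR[OF N])
  finally show "N ((1 - t) *\<^sub>R x + t *\<^sub>R y) \<le> (1 - t) * N x + t * N y" .
qed simp

lemma is_norm_ge_norm:
  fixes N :: "'a::euclidean_space \<Rightarrow> real"
  assumes N: "is_norm N"
  obtains m where "0 < m" "\<And>x. m * norm x \<le> N x"
proof -
  have cont: "continuous_on UNIV N"
    using convex_on_continuous[OF open_UNIV is_norm_convex[OF N]] .
  have "sphere (0::'a) 1 \<noteq> {}"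
    by (metis empty_iff norm_Basis SOME_Basis mem_sphere_0)
  then obtain z where z: "z \<in> sphere 0 1" "\<And>y. y \<in> sphere 0 1 \<Longrightarrow> N z \<le> N y"
    using continuous_attains_inf[OF compact_sphere _ continuous_on_subset[OF cont]] by blast
  have "N z * norm x \<le> N x" for x
  proof (cases "x = 0")
    case False
    then have "N z \<le> N (inverse (norm x) *\<^sub>R x)"
      by (intro z(2)) simp
    also have "\<dots> = N x / norm x"
      by (simp add: is_norm_scaleR[OF N] divide_inverse_commute)
    finally show ?thesis
      using False by (simp add: pos_le_divide_eq)
  qed (simp add: is_norm_zero[OF N])
  moreover have "0 < N z"
    using z(1) by (intro is_norm_pos[OF N]) auto
  ultimately show ?thesis
    using that by blast
qed

lemma bdd_above_dual_norm_set:
  fixes N :: "'a::euclidean_space \<Rightarrow> real"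
  assumes N: "is_norm N"
  shows "bdd_above {g \<bullet> x | x. N x \<le> 1}"
proof -
  obtain m where m: "0 < m" "\<And>x. m * norm x \<le> N x"
    using is_norm_ge_norm[OF N] by blast
  have "g \<bullet> x \<le> norm g / m" if "N x \<le> 1" for x
  proof -
    have "norm x \<le> 1 / m"
      using m order_trans[OF m(2) that] by (simp add: le_divide_eq mult.commute)
    then have "norm g * norm x \<le> norm g / m"
      using mult_left_mono[of "norm x" "1 / m" "norm g"] by simp
    then show ?thesis
      using norm_cauchy_schwarz[of g x] by linarith
  qed
  then show ?thesis
    unfolding bdd_above_def by blast
qed

lemma inner_le_dual_norm:
  fixes N :: "'a::euclidean_space \<Rightarrow> real"
  assumes N: "is_norm N" and "N x \<le> 1"
  shows "g \<bullet> x \<le> dual_norm N g"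
  unfolding dual_norm_def using assms by (intro cSup_upper[OF _ bdd_above_dual_norm_set[OF N]]) blast

lemma inner_le_dual_norm_mult:
  fixes N :: "'a::euclidean_space \<Rightarrow> real"
  assumes N: "is_norm N"
  shows "g \<bullet> x \<le> dual_norm N g * N x"
proof (cases "x = 0")
  case False
  have Nx: "0 < N x"
    using is_norm_pos[OF N False] .
  have "g \<bullet> (inverse (N x) *\<^sub>R x) \<le> dual_norm N g"
    using Nx by (intro inner_le_dual_norm[OF N]) (simp add: is_norm_scaleR[OF N])
  then show ?thesis
    using Nx by (simp add: field_simps)
qed (simp add: is_norm_zero[OF N])

lemma dual_norm_pos:
  fixes N :: "'a::euclidean_space \<Rightarrow> real"
  assumes N: "is_norm N" and "g \<noteq> 0"
  shows "0 < dual_norm N g"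
proof -
  have "0 < g \<bullet> g"
    using \<open>g \<noteq> 0\<close> by simp
  also have "\<dots> \<le> dual_norm N g * N g"
    using inner_le_dual_norm_mult[OF N] .
  finally show ?thesis
    using is_norm_nonneg[OF N, of g] by (simp add: zero_less_mult_iff)
qed

lemma DERIV_nonneg_at_right_local_min:
  fixes f :: "real \<Rightarrow> real"
  assumes "DERIV f x :> l" and "\<And>h. 0 < h \<Longrightarrow> h < e \<Longrightarrow> f x \<le> f (x + h)" and "0 < e"
  shows "0 \<le> l"
proof (rule ccontr)
  assume "\<not> 0 \<le> l"
  then obtain e' where "0 < e'" "\<And>h. 0 < h \<Longrightarrow> h < e' \<Longrightarrow> f (x + h) < f x"
    using DERIV_neg_dec_right[OF assms(1)] by force
  moreover define h where "h = min e e' / 2"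
  ultimately have "f (x + h) < f x" and "f x \<le> f (x + h)"
    using assms(2,3) by auto
  then show False
    by simp
qed

lemma DERIV_along_line:
  fixes f :: "'a::real_inner \<Rightarrow> real"
  assumes "(f has_derivative (\<lambda>h. G \<bullet> h)) (at (x + t *\<^sub>R v))"
  shows "((\<lambda>s. f (x + s *\<^sub>R v)) has_real_derivative (G \<bullet> v)) (at t)"
proof -
  have "((\<lambda>s. x + s *\<^sub>R v) has_derivative (\<lambda>h. h *\<^sub>R v)) (at t)"
    by (auto intro!: derivative_eq_intros)
  from has_derivative_compose[OF this assms]
  show ?thesis
    by (simp add: has_field_derivative_def mult_commute_abs)
qed

lemma convex_on_gradient_ineq:
  fixes f :: "'a::real_inner \<Rightarrow> real"
  assumes convex: "convex_on UNIV f" and deriv: "(f has_derivative (\<lambda>h. G \<bullet> h)) (at x)"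
  shows "f x + G \<bullet> (y - x) \<le> f y"
proof -
  define k where "k s = f x + s * (f y - f x) - f (x + s *\<^sub>R (y - x))" for s
  have "((\<lambda>s. f (x + s *\<^sub>R (y - x))) has_real_derivative G \<bullet> (y - x)) (at 0)"
    by (rule DERIV_along_line) (use deriv in simp)
  then have "DERIV k 0 :> f y - f x - G \<bullet> (y - x)"
    unfolding k_def by (auto intro!: derivative_eq_intros)
  moreover have "k 0 \<le> k (0 + h)" if "0 < h" "h < 1" for h
  proof -
    have "x + h *\<^sub>R (y - x) = (1 - h) *\<^sub>R x + h *\<^sub>R y"
      by (simp add: algebra_simps)
    then show ?thesis
      using convex_onD[OF convex, of h x y] that by (simp add: k_def algebra_simps)
  qed
  ultimately have "0 \<le> f y - f x - G \<bullet> (y - x)"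
    by (rule DERIV_nonneg_at_right_local_min) auto
  then show ?thesis
    by simp
qed

lemma convex_on_hessian_nonneg:
  fixes f :: "'a::real_inner \<Rightarrow> real"
  assumes convex: "convex_on UNIV f"
    and f_grad: "\<And>x. (f has_derivative (\<lambda>h. gf x \<bullet> h)) (at x)"
    and f_hess: "(gf has_derivative blinfun_apply (hf x)) (at x)"
  shows "0 \<le> (hf x) r \<bullet> r"
proof -
  define k where "k s = gf (x + s *\<^sub>R r) \<bullet> r" for s
  have "((\<lambda>s. x + s *\<^sub>R r) has_derivative (\<lambda>h. h *\<^sub>R r)) (at 0)"
    by (auto intro!: derivative_eq_intros)
  from has_derivative_compose[OF this] f_hess
  have "(k has_derivative (\<lambda>h. (hf x) (h *\<^sub>R r) \<bullet> r)) (at 0)"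
    unfolding k_def by (auto intro!: derivative_eq_intros)
  then have "DERIV k 0 :> (hf x) r \<bullet> r"
    by (simp add: has_field_derivative_def blinfun.scaleR_right mult_commute_abs)
  moreover have "k 0 \<le> k (0 + h)" if "0 < h" "h < 1" for h
  proof -
    \<comment> \<open>monotonicity of the gradient: add the gradient inequalities at both ends of the segment\<close>
    have "f x + gf x \<bullet> (h *\<^sub>R r) \<le> f (x + h *\<^sub>R r)"
      using convex_on_gradient_ineq[OF convex f_grad, of x "x + h *\<^sub>R r"] by simp
    moreover have "f (x + h *\<^sub>R r) + gf (x + h *\<^sub>R r) \<bullet> (- h *\<^sub>R r) \<le> f x"
      using convex_on_gradient_ineq[OF convex f_grad, of "x + h *\<^sub>R r" x] by simp
    ultimately have "0 \<le> h * (k h - k 0)"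
      by (simp add: k_def algebra_simps)
    then show ?thesis
      using that by (simp add: zero_le_mult_iff)
  qed
  ultimately show ?thesis
    by (rule DERIV_nonneg_at_right_local_min) auto
qed

lemma strongly_convex_gradient_monotone:
  assumes N: "is_norm N"
    and strong: "\<And>x y. x \<in> D \<Longrightarrow> y \<in> D \<Longrightarrow> d x + gd x \<bullet> (y - x) + \<sigma> / 2 * (N (y - x))\<^sup>2 \<le> d y"
    and "x \<in> D" "y \<in> D"
  shows "\<sigma> * (N (y - x))\<^sup>2 \<le> (gd y - gd x) \<bullet> (y - x)"
proof -
  have "d x + gd x \<bullet> (y - x) + \<sigma> / 2 * (N (y - x))\<^sup>2 \<le> d y"
    and "d y + gd y \<bullet> (x - y) + \<sigma> / 2 * (N (y - x))\<^sup>2 \<le> d x"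
    using strong[of x y] strong[of y x] assms(3,4) is_norm_commute[OF N, of x y] by auto
  then show ?thesis
    by (simp add: inner_diff_left inner_diff_right algebra_simps)
qed

text \<open>The Hessian enters through its symmetric part: symmetry of second derivatives is not assumed.\<close>
lemma is_T_variational_ineq:
  assumes T: "is_T f gf hf d gd D psi A xb T"
    and convex_D: "convex D" and convex_psi: "convex_on D psi" and y: "y \<in> D"
    and d_grad: "(d has_derivative (\<lambda>h. gd T \<bullet> h)) (at T)"
  shows "psi T \<le> psi y + (gf xb + A *\<^sub>R (gd T - gd xb)) \<bullet> (y - T)
                 + 1/2 * ((hf xb) (y - T) \<bullet> (T - xb) + (hf xb) (T - xb) \<bullet> (y - T))"
proof -
  define v where "v = y - T"
  define m where "m z = model f gf hf d gd psi A xb z - psi z" for z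
  define phi where "phi t = m (T + t *\<^sub>R v) + (1 - t) * psi T + t * psi y" for t
  have TD: "T \<in> D" and T_min: "\<And>z. z \<in> D \<Longrightarrow> m T + psi T \<le> m z + psi z"
    using T unfolding is_T_def m_def by auto
  have phi_min: "phi 0 \<le> phi (0 + t)" if "0 < t" "t < 1" for t
  proof -
    have segment: "T + t *\<^sub>R v = (1 - t) *\<^sub>R T + t *\<^sub>R y"
      by (simp add: v_def algebra_simps)
    have "T + t *\<^sub>R v \<in> D"
      unfolding segment using convexD[OF convex_D TD y] that by simp
    moreover have "psi (T + t *\<^sub>R v) \<le> (1 - t) * psi T + t * psi y"
      unfolding segment using convex_onD[OF convex_psi, of t T y] TD y that by simp
    ultimately show ?thesis
      using T_min[of "T + t *\<^sub>R v"] by (simp add: phi_def)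
  qed
  have phi_deriv: "DERIV phi 0 :> gf xb \<bullet> v + 1/2 * ((hf xb) v \<bullet> (T - xb) + (hf xb) (T - xb) \<bullet> v)
      + A * (gd T \<bullet> v - gd xb \<bullet> v) - psi T + psi y"
  proof -
    have "((\<lambda>t. d (T + t *\<^sub>R v)) has_real_derivative gd T \<bullet> v) (at 0)"
      by (rule DERIV_along_line) (use d_grad in simp)
    then show ?thesis
      unfolding phi_def m_def model_def bregman_def has_field_derivative_def
      by (auto intro!: derivative_eq_intros simp: blinfun.bilinear_simps algebra_simps)
  qed
  have "0 \<le> gf xb \<bullet> v + 1/2 * ((hf xb) v \<bullet> (T - xb) + (hf xb) (T - xb) \<bullet> v)
      + A * (gd T \<bullet> v - gd xb \<bullet> v) - psi T + psi y"
    using DERIV_nonneg_at_right_local_min[OF phi_deriv phi_min] by simp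
  then show ?thesis
    by (simp add: v_def inner_add_left inner_diff_left algebra_simps)
qed

lemma cubic_le_quadratic:
  fixes a b H n :: real
  assumes "0 < a" "0 < H" "0 \<le> n" "a\<^sup>2 = H / 3 * b" "a * n\<^sup>2 \<le> b * n"
  shows "H / 6 * n ^ 3 \<le> a / 2 * n\<^sup>2"
proof -
  have "H * n \<le> 3 * a"
  proof (cases "n = 0")
    case False
    then have "a * n \<le> b"
      using assms(3,5) by (simp add: power2_eq_square)
    then have "a * (H * n) \<le> a * (3 * a)"
      using assms(2,4) mult_left_mono[of "a * n" b H] by (simp add: power2_eq_square algebra_simps)
    then show ?thesis
      using assms(1) by simp
  qed (use assms in simp)
  then have "H * n * n\<^sup>2 \<le> 3 * a * n\<^sup>2"
    by (simp add: mult_right_mono)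
  then show ?thesis
    by (simp add: power3_eq_cube power2_eq_square algebra_simps)
qed

theorem lemma2:
  fixes N :: "'a::euclidean_space \<Rightarrow> real"
    and f :: "'a \<Rightarrow> real" and gf :: "'a \<Rightarrow> 'a" and hf :: "'a \<Rightarrow> 'a \<Rightarrow>\<^sub>L 'a"
    and psi :: "'a \<Rightarrow> real" and D :: "'a set"
    and d :: "'a \<Rightarrow> real" and gd :: "'a \<Rightarrow> 'a"
    and \<sigma> H A :: real and xb g T :: 'a
  assumes norm: "is_norm N"
    and f_convex: "convex_on UNIV f"
    and f_grad: "\<And>x. (f has_derivative (\<lambda>h. gf x \<bullet> h)) (at x)"
    and f_hess: "\<And>x. (gf has_derivative blinfun_apply (hf x)) (at x)"
    and hess_cont: "continuous_on UNIV hf"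
    and psi_closed: "closed_convex_fun D psi"
    and sigma: "0 < \<sigma>" "\<sigma> \<le> 1"
    and d_grad: "\<And>x. x \<in> D \<Longrightarrow> (d has_derivative (\<lambda>h. gd x \<bullet> h)) (at x)"
    and d_strong: "\<And>x y. x \<in> D \<Longrightarrow> y \<in> D \<Longrightarrow>
                     d y \<ge> d x + gd x \<bullet> (y - x) + \<sigma> / 2 * (N (y - x))\<^sup>2"
    and d_lip: "\<And>x y. x \<in> D \<Longrightarrow> y \<in> D \<Longrightarrow> dual_norm N (gd x - gd y) \<le> N (x - y)"
    and xb: "xb \<in> D"
    and H: "H > 0"
    and g_sub: "is_subgrad D psi xb g"
    and Fprime_nz: "gf xb + g \<noteq> 0"
    and A_def: "A = 1 / \<sigma> * sqrt (H / 3 * dual_norm N (gf xb + g))"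
    and T_def: "is_T f gf hf d gd D psi A xb T"
    and upper: "f T \<le> f xb + gf xb \<bullet> (T - xb) + 1/2 * ((hf xb) (T - xb) \<bullet> (T - xb))
                      + H / 6 * (N (T - xb)) ^ 3"
  shows "(f xb + psi xb) - (f T + psi T) \<ge>
           1/2 * ((hf xb) (T - xb) \<bullet> (T - xb)) + 1/2 * \<sigma> * A * (N (T - xb))\<^sup>2"
proof -
  define r where "r = T - xb"
  define Q where "Q = (hf xb) r \<bullet> r"
  define dn where "dn = dual_norm N (gf xb + g)"
  have TD: "T \<in> D"
    using T_def unfolding is_T_def by blast
  have "convex D" "convex_on D psi"
    using psi_closed unfolding closed_convex_fun_def by auto
  from is_T_variational_ineq[OF T_def this xb d_grad[OF TD]]
  have optimality: "psi T \<le> psi xb - gf xb \<bullet> r - A * ((gd T - gd xb) \<bullet> r) - Q"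
    by (simp add: r_def Q_def blinfun.diff_right inner_diff_right inner_commute algebra_simps)
  have monotone: "\<sigma> * (N r)\<^sup>2 \<le> (gd T - gd xb) \<bullet> r"
    unfolding r_def using strongly_convex_gradient_monotone[OF norm d_strong xb TD] .
  have subgradient: "psi xb + g \<bullet> r \<le> psi T"
    using g_sub TD unfolding is_subgrad_def r_def by blast
  have dual: "(gf xb + g) \<bullet> (- r) \<le> dn * N r"
    using inner_le_dual_norm_mult[OF norm] is_norm_minus[OF norm] unfolding dn_def by metis
  have Q_nonneg: "0 \<le> Q"
    unfolding Q_def using convex_on_hessian_nonneg[OF f_convex f_grad f_hess] .
  have dn_pos: "0 < dn"
    unfolding dn_def using dual_norm_pos[OF norm Fprime_nz] .
  have "\<sigma> * A = sqrt (H / 3 * dn)"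
    using sigma unfolding A_def dn_def by simp
  then have \<sigma>A_pos: "0 < \<sigma> * A" and \<sigma>A_sq: "(\<sigma> * A)\<^sup>2 = H / 3 * dn"
    using H dn_pos by auto
  have "0 \<le> A"
    using \<sigma>A_pos sigma by (simp add: zero_less_mult_iff)
  then have "\<sigma> * A * (N r)\<^sup>2 \<le> A * ((gd T - gd xb) \<bullet> r)"
    using mult_left_mono[OF monotone] by (simp add: algebra_simps)
  with optimality have descent: "\<sigma> * A * (N r)\<^sup>2 \<le> psi xb - psi T - gf xb \<bullet> r - Q"
    by linarith
  then have "\<sigma> * A * (N r)\<^sup>2 \<le> dn * N r"
    using subgradient dual Q_nonneg by (simp add: inner_add_left)
  then have "H / 6 * (N r) ^ 3 \<le> \<sigma> * A / 2 * (N r)\<^sup>2"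
    using cubic_le_quadratic[OF \<sigma>A_pos H is_norm_nonneg[OF norm] \<sigma>A_sq] by blast
  then show ?thesis
    using upper descent unfolding r_def[symmetric] Q_def[symmetric] by (simp add: algebra_simps)
qed

end
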